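(* Let $f\colon(0,\infty)\to\mathbb{R}$ be such that $x\mapsto f(|x|)$ is integrable on $\mathbb{R}^n\setminus\{0\}$, and let $h\colon\mathbb{R}^n\to\mathbb{R}$ be continuous, positive definite, and integrable with $h(x)\le f(|x|)$ for all $x\in\mathbb{R}^n\setminus\{0\}$. Let $\rho>0$ and $r>0$ satisfy $\mathrm{vol}(B^n_r(0))=1/\rho$. Then \[ \rho\,\widehat h(0)-h(0)\le\rho\int_{\mathbb{R}^n\setminus B^n_r(0)}f(|x|)\,dx. \]
   Context: A continuous function $h\colon\mathbb{R}^n\to\mathbb{C}$ is positive definite if $h(-x)=\overline{h(x)}$ for all $x$ and for all $N$ and $x_1,\dots,x_N\in\mathbb{R}^n$ the matrix $(h(x_j-x_k))_{1\le j,k\le N}$ is positive semidefinite. The Fourier transform is $\widehat h(y)=\int_{\mathbb{R}^n}h(x)e^{-2\pi i\langle x,y\rangle}\,dx$. $B^n_r(0)$ is the closed ball of radius $r$ about the origin. *)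

theory Defs
  imports "HOL-Analysis.Analysis"
begin

definition positive_definite :: "('a::euclidean_space \<Rightarrow> complex) \<Rightarrow> bool" where
  "positive_definite h \<longleftrightarrow>
     continuous_on UNIV h \<and>
     (\<forall>x. h (-x) = cnj (h x)) \<and>
     (\<forall>(N::nat) (xs::nat \<Rightarrow> 'a) (c::nat \<Rightarrow> complex).
        let q = (\<Sum>j<N. \<Sum>k<N. c j * cnj (c k) * h (xs j - xs k)) in
        Im q = 0 \<and> Re q \<ge> 0)"

definition fourier_transform :: "('a::euclidean_space \<Rightarrow> complex) \<Rightarrow> 'a \<Rightarrow> complex" where
  "fourier_transform h y =
     integral\<^sup>L lebesgue (\<lambda>x. h x * exp (- 2 * complex_of_real pi * \<i> * complex_of_real (x \<bullet> y)))"

end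

theory Submission
  imports Defs
begin

text \<open>The Fourier transform at \<open>0\<close> is the integral of \<open>h\<close>. A positive definite function peaks at
  the origin, so over the ball of volume \<open>1/\<rho>\<close> the integral is at most \<open>h 0 / \<rho>\<close>, while outside
  the ball \<open>h\<close> is dominated by \<open>f (norm x)\<close>.\<close>

lemma positive_definite_le_at_zero:
  fixes h :: "'a::euclidean_space \<Rightarrow> real"
  assumes "positive_definite (\<lambda>x. complex_of_real (h x))"
  shows "h x \<le> h 0"
proof -
  have sym: "h (-x) = h x"
    using assms unfolding positive_definite_def
    by (metis complex_cnj_complex_of_real of_real_eq_iff)
  define xs :: "nat \<Rightarrow> 'a" where "xs = (\<lambda>i. if i = 0 then x else 0)"
  define c :: "nat \<Rightarrow> complex" where "c = (\<lambda>i. if i = 0 then 1 else -1)"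
  have "Re (\<Sum>j<2. \<Sum>k<2. c j * cnj (c k) * complex_of_real (h (xs j - xs k))) \<ge> 0"
    using assms unfolding positive_definite_def Let_def by blast
  \<comment> \<open>with points \<open>x, 0\<close> and weights \<open>1, -1\<close> the quadratic form is \<open>2 h 0 - h x - h (-x)\<close>\<close>
  hence "2 * h 0 - h x - h (-x) \<ge> 0"
    by (simp add: xs_def c_def numeral_2_eq_2 lessThan_Suc)
  with sym show ?thesis by simp
qed

lemma Re_fourier_transform_zero:
  fixes h :: "'a::euclidean_space \<Rightarrow> real"
  shows "Re (fourier_transform (\<lambda>x. complex_of_real (h x)) 0) = integral\<^sup>L lebesgue h"
  unfolding fourier_transform_def by simp

lemma integrable_imp_set_integrable:
  fixes f :: "'a \<Rightarrow> 'b::{banach, second_countable_topology}"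
  assumes "integrable M f" and "A \<in> sets M"
  shows "set_integrable M A f"
  unfolding set_integrable_def using assms by (rule integrable_mult_indicator[rotated])

lemma integral_eq_set_integral_plus_complement:
  fixes f :: "'a \<Rightarrow> real"
  assumes "integrable M f" and "A \<in> sets M"
  shows "integral\<^sup>L M f = (\<integral>x \<in> A. f x \<partial>M) + (\<integral>x \<in> space M - A. f x \<partial>M)"
proof -
  have "(\<integral>x \<in> A \<union> (space M - A). f x \<partial>M) = (\<integral>x \<in> A. f x \<partial>M) + (\<integral>x \<in> space M - A. f x \<partial>M)"
    using assms by (intro set_integral_Un integrable_imp_set_integrable) auto
  moreover have "A \<union> (space M - A) = space M"
    using sets.sets_into_space[OF assms(2)] by blast
  ultimately show ?thesis
    by (simp add: set_integral_space[OF assms(1)])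
qed

lemma integral_le_bound_on_set_and_complement:
  fixes h g :: "'a \<Rightarrow> real"
  assumes h_int: "integrable M h" and g_int: "set_integrable M (space M - A) g"
    and A: "A \<in> sets M" "emeasure M A \<noteq> \<infinity>"
    and h_le_c: "\<And>x. x \<in> A \<Longrightarrow> h x \<le> c"
    and h_le_g: "\<And>x. x \<in> space M - A \<Longrightarrow> h x \<le> g x"
  shows "integral\<^sup>L M h \<le> measure M A * c + (\<integral>x \<in> space M - A. g x \<partial>M)"
proof -
  have "set_integrable M A (\<lambda>_. c)"
    using A unfolding set_integrable_def by (simp add: top.not_eq_extremum)
  then have "(\<integral>x \<in> A. h x \<partial>M) \<le> (\<integral>x \<in> A. c \<partial>M)"
    by (rule set_integral_mono[OF integrable_imp_set_integrable[OF h_int A(1)]]) (rule h_le_c)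
  also have "\<dots> = measure M A * c"
    by (simp add: set_integral_const[OF A])
  finally have on_A: "(\<integral>x \<in> A. h x \<partial>M) \<le> measure M A * c" .
  have "(\<integral>x \<in> space M - A. h x \<partial>M) \<le> (\<integral>x \<in> space M - A. g x \<partial>M)"
    using A(1) h_le_g
    by (intro set_integral_mono[OF integrable_imp_set_integrable[OF h_int] g_int]) auto
  with on_A show ?thesis
    using integral_eq_set_integral_plus_complement[OF h_int A(1)] by linarith
qed

theorem lemma8p3:
  fixes f :: "real \<Rightarrow> real" and h :: "'a::euclidean_space \<Rightarrow> real" and \<rho> r :: real
  assumes f_int: "set_integrable lebesgue (UNIV - {0}) (\<lambda>x::'a. f (norm x))"
    and h_cont: "continuous_on UNIV h"
    and h_pd: "positive_definite (\<lambda>x. complex_of_real (h x))"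
    and h_int: "integrable lebesgue h"
    and h_le: "\<And>x. x \<noteq> 0 \<Longrightarrow> h x \<le> f (norm x)"
    and \<rho>_pos: "\<rho> > 0" and r_pos: "r > 0"
    and vol: "measure lebesgue (cball (0::'a) r) = 1 / \<rho>"
  shows "\<rho> * Re (fourier_transform (\<lambda>x. complex_of_real (h x)) 0) - h 0
           \<le> \<rho> * (\<integral>x \<in> - cball (0::'a) r. f (norm x) \<partial>lebesgue)"
proof -
  let ?B = "cball (0::'a) r"
  \<comment> \<open>\<open>measure\<close> is \<open>0\<close> on sets of infinite measure, and \<open>1 / \<rho> \<noteq> 0\<close>\<close>
  have finite_ball: "emeasure lebesgue ?B \<noteq> \<infinity>"
    using vol \<rho>_pos by (auto simp: measure_def)
  let ?I = "\<integral>x \<in> space lebesgue - ?B. f (norm x) \<partial>lebesgue"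
  have "set_integrable lebesgue (space lebesgue - ?B) (\<lambda>x. f (norm x))"
    using r_pos by (intro set_integrable_subset[OF f_int]) auto
  then have "integral\<^sup>L lebesgue h \<le> measure lebesgue ?B * h 0 + ?I"
    using finite_ball positive_definite_le_at_zero[OF h_pd] r_pos
    by (intro integral_le_bound_on_set_and_complement[OF h_int]) (auto intro: h_le)
  then have "\<rho> * integral\<^sup>L lebesgue h \<le> \<rho> * (measure lebesgue ?B * h 0 + ?I)"
    using \<rho>_pos by (simp add: mult_left_mono)
  also have "\<dots> = h 0 + \<rho> * ?I"
    using vol \<rho>_pos by (simp add: field_simps)
  finally show ?thesis
    by (simp add: Re_fourier_transform_zero Compl_eq_Diff_UNIV)
qed

end
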